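(* For every integer $t\ge 3$, $W(t-1)<t^{\frac{0.96}{\log\log t}}$, where $W(m)$ denotes the number of squarefree positive divisors of $m$ and $\log$ is the natural logarithm. *)

theory Defs
  imports Complex_Main "HOL-Computational_Algebra.Squarefree"
begin

definition W :: "nat \<Rightarrow> nat" where
  "W m = card {d. d dvd m \<and> 0 < d \<and> squarefree d}"

end

theory Submission
  imports Defs "HOL-Analysis.Harmonic_Numbers"
begin

(* Let m = t - 1 have k distinct prime factors. Then W m \<le> 2^k, and m is at least the product
   of its prime factors, hence at least primorial_lb k, a product of explicit lower bounds for
   the first k primes. As 2^k = exp (k ln 2) and t powr (0.96 / ln (ln t)) =
   exp (0.96 ln t / ln (ln t)), it suffices to show k ln 2 < 0.96 ln t / ln (ln t). For k \<le> 3
   this follows from x / ln x \<ge> e. For larger k, since x / ln x increases on [e, \<infinity>), it is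
   enough to find e \<le> l \<le> ln (primorial_lb k) with k ln 2 < 0.96 l / ln l: for 4 \<le> k \<le> 16
   such l are checked numerically, and for k \<ge> 17 l = k ln k works because
   primorial_lb k \<ge> k^k. *)

lemma W_le_two_pow_card_prime_factors:
  assumes "0 < m"
  shows "W m \<le> 2 ^ card (prime_factors m)"
proof -
  let ?D = "{d. d dvd m \<and> 0 < d \<and> squarefree d}"
  have multiplicity_squarefree: "multiplicity p d = (if p \<in> prime_factors d then 1 else 0)"
    if "d \<in> ?D" "prime p" for d p
  proof -
    have "multiplicity p d \<le> 1"
      using that squarefree_factorial_semiring''[of d] by auto
    then show ?thesis
      using that(2) by (auto simp: prime_factors_multiplicity)
  qed
  have "inj_on prime_factors ?D"
  proof (rule inj_onI)
    fix d1 d2 assume d: "d1 \<in> ?D" "d2 \<in> ?D" "prime_factors d1 = prime_factors d2"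
    have "normalize d1 = normalize d2"
      by (rule multiplicity_eq_imp_eq) (use d multiplicity_squarefree in auto)
    then show "d1 = d2" by simp
  qed
  moreover have "prime_factors ` ?D \<subseteq> Pow (prime_factors m)"
    using assms by (auto intro: dvd_prime_factors[THEN subsetD])
  ultimately have "card ?D \<le> card (Pow (prime_factors m))"
    by (intro card_inj_on_le) simp_all
  then show ?thesis
    by (simp add: W_def card_Pow)
qed

lemma prod_prime_factors_le_self:
  assumes "0 < (m::nat)"
  shows "\<Prod>(prime_factors m) \<le> m"
proof -
  have "\<Prod>(prime_factors m) \<le> (\<Prod>p\<in>prime_factors m. p ^ multiplicity p m)"
  proof (rule prod_mono, safe)
    fix p assume "p \<in> prime_factors m"
    then have "0 < multiplicity p m" "0 < p"
      by (auto simp: prime_factors_multiplicity prime_gt_0_nat)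
    then show "p \<le> p ^ multiplicity p m"
      by (simp add: self_le_power)
  qed
  also have "\<dots> = m"
    using assms by (subst prod_prime_factors) auto
  finally show ?thesis .
qed

lemma card_primes_less_le: "card {p::nat. prime p \<and> p < x} \<le> (x - 1) div 3 + 2"
proof -
  define B where "B = {p::nat. prime p \<and> 5 \<le> p \<and> p < x}"
  have "{p::nat. prime p \<and> p < x} \<subseteq> {2, 3} \<union> B"
  proof
    fix p assume p: "p \<in> {p::nat. prime p \<and> p < x}"
    moreover have "p \<noteq> 4"
      using p prime_nat_iff[of 4] by force
    ultimately show "p \<in> {2, 3} \<union> B"
      using prime_ge_2_nat[of p] unfolding B_def by auto
  qed
  moreover have "finite B"
    unfolding B_def by (rule finite_subset[of _ "{..<x}"]) auto
  ultimately have "card {p::nat. prime p \<and> p < x} \<le> card ({2, 3} \<union> B)"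
    by (intro card_mono) simp_all
  also have "\<dots> \<le> 2 + card B"
    using card_Un_le[of "{2::nat, 3}" B] by simp
  \<comment> \<open>Primes above 3 are \<open>\<equiv> \<plusminus>1 (mod 6)\<close>, so at most one lies in each block
    \<open>{3j, 3j+1, 3j+2}\<close>.\<close>
  also have "card B \<le> (x - 1) div 3"
  proof -
    have inj: "inj_on (\<lambda>p. p div 3) B"
    proof
      fix p p' assume "p \<in> B" "p' \<in> B" and eq: "p div 3 = p' div 3"
      then have "prime p" "prime p'" "5 \<le> p" "5 \<le> p'"
        by (auto simp: B_def)
      then have odd: "odd p" "odd p'" and "\<not> 3 dvd p" "\<not> 3 dvd p'"
        using prime_odd_nat prime_nat_iff[of p] prime_nat_iff[of p'] by auto
      then have mod3: "p mod 3 = 1 \<or> p mod 3 = 2" "p' mod 3 = 1 \<or> p' mod 3 = 2"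
        by presburger+
      have "p mod 3 = p' mod 3"
      proof (rule ccontr)
        assume "p mod 3 \<noteq> p' mod 3"
        then have "p + p' = 6 * (p div 3) + 3"
          using mod3 eq div_mult_mod_eq[of p 3] div_mult_mod_eq[of p' 3] by linarith
        with odd show False by presburger
      qed
      then show "p = p'"
        using eq div_mult_mod_eq[of p 3] div_mult_mod_eq[of p' 3] by linarith
    qed
    have "(\<lambda>p. p div 3) ` B \<subseteq> {1..(x - 1) div 3}"
      by (auto simp: B_def intro!: div_le_mono)
    from card_inj_on_le[OF inj this] show ?thesis
      by simp
  qed
  finally show ?thesis by simp
qed

definition small_primes :: "nat list" where
  "small_primes = [2, 3, 5, 7, 11, 13, 17, 19, 23, 29, 31, 37, 41, 43, 47, 53]"

(* prime_lb j is a lower bound for the (j+1)-st prime: exact up to 53, and beyond that it comes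
   from card_primes_less_le. *)
definition prime_lb :: "nat \<Rightarrow> nat" where
  "prime_lb j = (if j < 16 then small_primes ! j else max 53 (3 * j - 5))"

definition primorial_lb :: "nat \<Rightarrow> nat" where
  "primorial_lb n = (\<Prod>i<n. prime_lb i)"

lemma prime_less_54_in_small_primes:
  assumes "prime p" "p < 54"
  shows "p \<in> set small_primes"
proof -
  have "\<forall>n\<in>{..<54}. n \<in> set small_primes \<or> n \<le> 1 \<or> (\<exists>d\<in>{2,3,5,7}. d dvd n \<and> d \<noteq> n)"
    by (simp add: small_primes_def lessThan_nat_numeral)
  then have "p \<in> set small_primes \<or> p \<le> 1 \<or> (\<exists>d\<in>{2,3,5,7}. d dvd p \<and> d \<noteq> p)"
    using assms(2) by blast
  then show ?thesis
    using assms(1) by (auto simp: prime_nat_iff)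
qed

lemma mono_prime_lb: "mono prime_lb"
proof (rule mono_iff_le_Suc[THEN iffD2], rule allI)
  fix i
  have "\<forall>i\<in>{..<15}. prime_lb i \<le> prime_lb (Suc i)"
    by (simp add: lessThan_nat_numeral prime_lb_def small_primes_def)
  then show "prime_lb i \<le> prime_lb (Suc i)"
    by (cases "i < 15") (auto simp: prime_lb_def small_primes_def)
qed

lemma prime_lb_le_prime:
  assumes "prime x"
  shows "prime_lb (card {p. prime p \<and> p < x}) \<le> x"
proof (cases "x < 54")
  case True
  let ?below = "filter (\<lambda>y. y < x) small_primes"
  have "{p. prime p \<and> p < x} \<subseteq> set ?below"
    using prime_less_54_in_small_primes True by auto
  then have "card {p. prime p \<and> p < x} \<le> length ?below"
    by (metis card_length card_mono dual_order.trans finite_set)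
  then have "prime_lb (card {p. prime p \<and> p < x}) \<le> prime_lb (length ?below)"
    by (rule monoD[OF mono_prime_lb])
  also have "\<dots> \<le> x"
  proof -
    have "\<forall>x\<in>set small_primes. prime_lb (length (filter (\<lambda>y. y < x) small_primes)) \<le> x"
      by (simp add: small_primes_def prime_lb_def)
    then show ?thesis
      using prime_less_54_in_small_primes assms True by blast
  qed
  finally show ?thesis .
next
  case False
  have "prime_lb (card {p. prime p \<and> p < x}) \<le> prime_lb ((x - 1) div 3 + 2)"
    by (rule monoD[OF mono_prime_lb card_primes_less_le])
  also have "\<dots> \<le> x"
    using False by (auto simp: prime_lb_def small_primes_def)
  finally show ?thesis .
qed

lemma prod_le_prod_of_rank_bound:
  fixes P :: "nat set" and f :: "nat \<Rightarrow> nat"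
  assumes "finite P" "\<forall>x\<in>P. f (card {y\<in>P. y < x}) \<le> x"
  shows "(\<Prod>i<card P. f i) \<le> \<Prod>P"
  using assms
proof (induction P rule: finite_linorder_max_induct)
  case empty
  then show ?case by simp
next
  case (insert b A)
  have "{y\<in>insert b A. y < x} = {y\<in>A. y < x}" if "x \<in> A" for x
    using insert.hyps(2) that by force
  then have "(\<Prod>i<card A. f i) \<le> \<Prod>A"
    using insert.IH insert.prems by auto
  moreover have "{y\<in>insert b A. y < b} = A"
    using insert.hyps(2) by auto
  then have "f (card A) \<le> b"
    using insert.prems by force
  ultimately have "(\<Prod>i<card A. f i) * f (card A) \<le> \<Prod>A * b"
    by (rule mult_le_mono)
  moreover have "b \<notin> A"
    using insert.hyps(2) by blast
  ultimately show ?case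
    using insert.hyps(1) by (simp add: mult.commute)
qed

lemma primorial_lb_le_prod_primes:
  assumes "finite P" "\<forall>p\<in>P. prime p"
  shows "primorial_lb (card P) \<le> \<Prod>P"
  unfolding primorial_lb_def
proof (rule prod_le_prod_of_rank_bound[OF assms(1)], intro ballI)
  fix x assume "x \<in> P"
  have "card {y\<in>P. y < x} \<le> card {p. prime p \<and> p < x}"
    using assms by (intro card_mono) auto
  then have "prime_lb (card {y\<in>P. y < x}) \<le> prime_lb (card {p. prime p \<and> p < x})"
    by (rule monoD[OF mono_prime_lb])
  also have "\<dots> \<le> x"
    using prime_lb_le_prime assms(2) \<open>x \<in> P\<close> by blast
  finally show "prime_lb (card {y\<in>P. y < x}) \<le> x" .
qed

lemma primorial_lb_le_prime_factors:
  assumes "0 < m"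
  shows "primorial_lb (card (prime_factors m)) \<le> m"
proof -
  have "primorial_lb (card (prime_factors m)) \<le> \<Prod>(prime_factors m)"
    by (rule primorial_lb_le_prod_primes) auto
  also have "\<dots> \<le> m"
    by (rule prod_prime_factors_le_self[OF assms])
  finally show ?thesis .
qed

lemma primorial_lb_pos: "0 < primorial_lb n"
proof -
  have "0 < prime_lb i" for i
    using monoD[OF mono_prime_lb, of 0 i] by (simp add: prime_lb_def small_primes_def)
  then show ?thesis
    by (simp add: primorial_lb_def prod_pos)
qed

lemma primorial_lb_Suc: "primorial_lb (Suc n) = primorial_lb n * prime_lb n"
  by (simp add: primorial_lb_def)

lemma ln2_bounds: "0.693 \<le> ln (2::real)" "ln (2::real) \<le> 0.69316"
  using ln_approx_bounds[of 2 3] by (simp_all add: eval_nat_numeral)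

lemma exp1_ge_2_7: "2.7 \<le> exp (1::real)"
  using e_approx_32 by (simp add: abs_if split: if_splits)

lemma exp_ge_sum_Taylor:
  assumes "0 \<le> (x::real)"
  shows "(\<Sum>i<n. x ^ i / fact i) \<le> exp x"
proof -
  have "(\<lambda>i. x ^ i / fact i) sums exp x"
    using exp_converges[of x] by (simp add: field_simps)
  then show ?thesis
    using assms sum_le_suminf[of "\<lambda>i. x ^ i / fact i" "{..<n}"] by (simp add: sums_iff)
qed

lemma ln_le_div_exp1:
  assumes "0 < (y::real)"
  shows "ln y \<le> y / exp 1"
  using ln_le_minus_one[of "y / exp 1"] assms by (simp add: ln_div)

lemma exp1_le_div_ln:
  assumes "1 < (x::real)"
  shows "exp 1 \<le> x / ln x"
  using ln_le_div_exp1[of x] assms by (simp add: field_simps)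

lemma div_ln_mono:
  fixes x y :: real
  assumes "exp 1 \<le> x" "x \<le> y"
  shows "x / ln x \<le> y / ln y"
proof -
  have "0 < x"
    using assms(1) exp_gt_zero[of 1] by linarith
  then have "1 \<le> ln x" "1 \<le> ln y"
    using assms by (auto simp: ln_ge_iff)
  moreover have "0 < y"
    using \<open>0 < x\<close> assms(2) by linarith
  ultimately have "inverse (ln x / x) \<le> inverse (ln y / y)"
    by (intro le_imp_inverse_le[OF ln_x_over_x_mono[OF assms]] divide_pos_pos) linarith+
  then show ?thesis
    by simp
qed

lemma two_pow_less_powr_iff:
  fixes t c :: real
  assumes "0 < t"
  shows "2 ^ k < t powr (c / ln (ln t)) \<longleftrightarrow> real k * ln 2 < c * (ln t / ln (ln t))"
proof -
  have "t powr (c / ln (ln t)) = exp (c * (ln t / ln (ln t)))"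
    using assms by (simp add: powr_def)
  moreover have "(2::real) ^ k = exp (real k * ln 2)"
    by (simp add: exp_of_nat_mult)
  ultimately show ?thesis
    by simp
qed

lemma ln_ge_pow2_bound:
  fixes N :: real
  assumes "2 ^ a \<le> N"
  shows "real a * ln 2 + 2 * (N - 2 ^ a) / (N + 2 ^ a) \<le> ln N"
proof (cases "N = 2 ^ a")
  case False
  then show ?thesis
    using ln_inverse_approx_ge[of "2 ^ a" N] assms by (simp add: ln_realpow add.commute)
qed (simp add: ln_realpow)

(* l = real a * 0.693 + ... is a lower bound for ln N (see ln_ge_pow2_bound), and y is an upper
   bound for ln l because l lies below a Taylor polynomial of exp y. *)
definition valid_certificate :: "real \<Rightarrow> nat \<Rightarrow> nat \<Rightarrow> real \<Rightarrow> bool" where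
  "valid_certificate N k a y \<longleftrightarrow>
    (let l = real a * 0.693 + 2 * (N - 2 ^ a) / (N + 2 ^ a)
     in 2 ^ a \<le> N \<and> 2.72 \<le> l \<and> l < (\<Sum>i<16. y ^ i / fact i) \<and> 0 \<le> y \<and>
        real k * 0.69316 * y \<le> 0.96 * l \<and> 0 < k)"

lemma valid_certificate_witness:
  assumes "valid_certificate N k a y"
  shows "\<exists>l. exp 1 \<le> l \<and> l \<le> ln N \<and> real k * ln 2 < 0.96 * (l / ln l)"
proof (intro exI conjI)
  define l where "l = real a * 0.693 + 2 * (N - 2 ^ a) / (N + 2 ^ a)"
  have N: "2 ^ a \<le> N" and l: "2.72 \<le> l" "l < (\<Sum>i<16. y ^ i / fact i)"
    and y: "0 \<le> y" "real k * 0.69316 * y \<le> 0.96 * l" and "0 < k"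
    using assms unfolding valid_certificate_def l_def Let_def by auto
  have "exp 1 \<le> (2.72::real)"
    using e_less_272 by simp
  with l(1) show "exp 1 \<le> l"
    by linarith
  have "l \<le> real a * ln 2 + 2 * (N - 2 ^ a) / (N + 2 ^ a)"
    unfolding l_def using mult_left_mono[OF ln2_bounds(1), of "real a"] by simp
  also have "\<dots> \<le> ln N"
    by (rule ln_ge_pow2_bound[OF N])
  finally show "l \<le> ln N" .
  have "l < exp y"
    using l(2) exp_ge_sum_Taylor[OF y(1), of 16] by linarith
  moreover have "0 < l"
    using l(1) by simp
  ultimately have "ln l < y"
    using ln_less_cancel_iff[of l "exp y"] by simp
  have "0 < ln l"
    using l(1) by simp
  have "real k * ln 2 * ln l < real k * 0.69316 * y"
    using ln2_bounds(2) \<open>ln l < y\<close> \<open>0 < ln l\<close> \<open>0 < k\<close>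
    by (intro mult_le_less_imp_less mult_left_mono) auto
  with y(2) show "real k * ln 2 < 0.96 * (l / ln l)"
    using \<open>0 < ln l\<close> by (simp add: field_simps)
qed

lemma ln_primorial_lb_witness_mid:
  assumes "4 \<le> k" "k \<le> 16"
  shows "\<exists>l. exp 1 \<le> l \<and> l \<le> ln (real (primorial_lb k)) \<and> real k * ln 2 < 0.96 * (l / ln l)"
proof -
  define certificates :: "(nat \<times> nat \<times> real) set" where
    "certificates = {(4, 7, 17/10), (5, 11, 21/10), (6, 14, 117/50), (7, 18, 129/50),
      (8, 23, 139/50), (9, 27, 14777/5000), (10, 32, 78/25), (11, 37, 163/50),
      (12, 42, 17/5), (13, 48, 351/100), (14, 53, 181/50), (15, 59, 93/25),
      (16, 64, 381/100)}"
  have "\<forall>(k, a, y)\<in>certificates. valid_certificate (real (primorial_lb k)) k a y"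
    by (simp add: certificates_def valid_certificate_def Let_def primorial_lb_def prime_lb_def
        small_primes_def lessThan_nat_numeral fact_numeral power_divide)
  moreover have "k \<in> fst ` certificates"
    using assms unfolding certificates_def by simp arith
  ultimately show ?thesis
    using valid_certificate_witness by fastforce
qed

lemma Suc_pow_Suc_le:
  assumes "28 \<le> k"
  shows "real (Suc k) ^ Suc k \<le> real k ^ k * (3 * real k - 5)"
proof -
  have "(1 + 1 / real k) ^ k \<le> exp 1"
    by (rule exp_ge_one_plus_x_over_n_power_n) (use assms in auto)
  also have "\<dots> \<le> 2.72"
    using e_less_272 by simp
  finally have bound: "(1 + 1 / real k) ^ k \<le> 2.72" .
  have "real (Suc k) = real k * (1 + 1 / real k)"
    using assms by (simp add: field_simps)
  then have "real (Suc k) ^ Suc k = (real k + 1) * (real k ^ k * (1 + 1 / real k) ^ k)"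
    by (simp add: power_mult_distrib)
  also have "\<dots> \<le> (real k + 1) * (real k ^ k * 2.72)"
    using bound by (intro mult_left_mono) auto
  also have "\<dots> = real k ^ k * (2.72 * (real k + 1))"
    by (simp add: algebra_simps)
  also have "\<dots> \<le> real k ^ k * (3 * real k - 5)"
    using assms by (intro mult_left_mono) auto
  finally show ?thesis .
qed

lemma pow_self_le_primorial_lb:
  assumes "17 \<le> k"
  shows "k ^ k \<le> primorial_lb k"
proof -
  have table: "\<forall>k\<in>{17..28}. k ^ k \<le> primorial_lb k"
    by (simp add: primorial_lb_def prime_lb_def small_primes_def atLeastAtMost_upt upt_rec
        lessThan_nat_numeral)
  show ?thesis
  proof (cases "k \<le> 28")
    case True
    then show ?thesis
      using assms table by simp
  next
    case False
    then have "28 \<le> k" by simp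
    then show ?thesis
    proof (induction k rule: nat_induct_at_least)
      case base
      show ?case
        by (rule table[rule_format]) simp
    next
      case (Suc n)
      have "prime_lb n = 3 * n - 5"
        using Suc.hyps by (simp add: prime_lb_def)
      then have "real (n ^ n * prime_lb n) = real n ^ n * (3 * real n - 5)"
        using Suc.hyps by (simp add: of_nat_diff)
      then have "real (Suc n ^ Suc n) \<le> real (n ^ n * prime_lb n)"
        using Suc_pow_Suc_le[OF Suc.hyps(1)] by (simp only: of_nat_power)
      then have "Suc n ^ Suc n \<le> n ^ n * prime_lb n"
        by (simp only: of_nat_le_iff)
      also have "\<dots> \<le> primorial_lb n * prime_lb n"
        using Suc.IH by simp
      finally show ?case
        by (simp add: primorial_lb_Suc)
    qed
  qed
qed

lemma ln_primorial_lb_witness_large: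
  assumes "17 \<le> k"
  shows "\<exists>l. exp 1 \<le> l \<and> l \<le> ln (real (primorial_lb k)) \<and> real k * ln 2 < 0.96 * (l / ln l)"
proof (intro exI conjI)
  have k: "17 \<le> real k"
    using assms by simp
  have "exp 1 \<le> real k"
    using e_less_272 k by linarith
  then have lnk: "1 \<le> ln (real k)"
    using k by (subst ln_ge_iff) auto
  moreover have "real k \<le> real k * ln (real k)"
    using lnk k by (simp add: mult_le_cancel_left1)
  ultimately show "exp 1 \<le> real k * ln (real k)"
    using \<open>exp 1 \<le> real k\<close> by linarith
  have "real k * ln (real k) = ln (real (k ^ k))"
    by (simp add: ln_realpow)
  also have "\<dots> \<le> ln (real (primorial_lb k))"
    using pow_self_le_primorial_lb[OF assms] assms
    by (intro ln_mono) (simp only: of_nat_le_iff, simp)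
  finally show "real k * ln (real k) \<le> ln (real (primorial_lb k))" .
  have "ln (real k * ln (real k)) = ln (real k) + ln (ln (real k))"
    using k lnk by (simp add: ln_mult)
  also have "ln (ln (real k)) \<le> ln (real k) / exp 1"
    by (rule ln_le_div_exp1) (use lnk in linarith)
  also have "\<dots> \<le> ln (real k) / 2.7"
    using exp1_ge_2_7 lnk by (intro divide_left_mono) auto
  finally have "ln (real k * ln (real k)) \<le> ln (real k) * (1 + 1 / 2.7)"
    by (simp add: algebra_simps)
  moreover have pos: "0 < ln (real k * ln (real k))"
    using \<open>real k \<le> real k * ln (real k)\<close> k by (intro ln_gt_zero) linarith
  ultimately have "ln 2 * ln (real k * ln (real k)) \<le> 0.69316 * (ln (real k) * (1 + 1 / 2.7))"
    using ln2_bounds(2) by (intro mult_mono) auto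
  also have "\<dots> < 0.96 * ln (real k)"
    using lnk by (simp add: field_simps)
  finally have "real k * (ln 2 * ln (real k * ln (real k))) < real k * (0.96 * ln (real k))"
    using k by simp
  then show "real k * ln 2 < 0.96 * (real k * ln (real k) / ln (real k * ln (real k)))"
    using pos by (simp add: field_simps)
qed

lemma ln_primorial_lb_witness:
  assumes "4 \<le> k"
  shows "\<exists>l. exp 1 \<le> l \<and> l \<le> ln (real (primorial_lb k)) \<and> real k * ln 2 < 0.96 * (l / ln l)"
  using ln_primorial_lb_witness_mid[OF assms] ln_primorial_lb_witness_large
  by (cases "k \<le> 16") auto

lemma ln2_mult_less_of_primorial_lb_le:
  fixes t :: real
  assumes "1 < ln t" "real (primorial_lb k) \<le> t"
  shows "real k * ln 2 < 0.96 * (ln t / ln (ln t))"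
proof (cases "k \<le> 3")
  case True
  then have "real k * ln 2 \<le> 3 * 0.69316"
    using ln2_bounds by (intro mult_mono) auto
  also have "\<dots> < 0.96 * exp 1"
    using exp1_ge_2_7 by simp
  also have "\<dots> \<le> 0.96 * (ln t / ln (ln t))"
    using exp1_le_div_ln[OF assms(1)] by simp
  finally show ?thesis .
next
  case False
  then obtain l where l: "exp 1 \<le> l" "l \<le> ln (real (primorial_lb k))"
    "real k * ln 2 < 0.96 * (l / ln l)"
    using ln_primorial_lb_witness[of k] by auto
  have "ln (real (primorial_lb k)) \<le> ln t"
    using assms(2) primorial_lb_pos[of k] by (intro ln_mono) auto
  then have "l / ln l \<le> ln t / ln (ln t)"
    using l(2) by (intro div_ln_mono[OF l(1)]) linarith
  then have "0.96 * (l / ln l) \<le> 0.96 * (ln t / ln (ln t))"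
    by simp
  with l(3) show ?thesis
    by linarith
qed

theorem lemma2p4:
  fixes t :: nat
  assumes "t \<ge> 3"
  shows "real (W (t - 1)) < real t powr (0.96 / ln (ln (real t)))"
proof -
  define k where "k = card (prime_factors (t - 1))"
  have "ln 3 \<le> ln (real t)"
    using assms by (intro ln_mono) auto
  then have "1 < ln (real t)"
    using ln3_gt_1 by linarith
  moreover have "primorial_lb k \<le> t"
    using primorial_lb_le_prime_factors[of "t - 1"] assms unfolding k_def by simp
  ultimately have "real k * ln 2 < 0.96 * (ln t / ln (ln t))"
    by (intro ln2_mult_less_of_primorial_lb_le) simp_all
  moreover have "0 < real t"
    using assms by simp
  ultimately have "2 ^ k < real t powr (0.96 / ln (ln (real t)))"
    by (simp only: two_pow_less_powr_iff)
  moreover have "W (t - 1) \<le> 2 ^ k"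
    using W_le_two_pow_card_prime_factors[of "t - 1"] assms unfolding k_def by simp
  then have "real (W (t - 1)) \<le> 2 ^ k"
    by (metis of_nat_le_iff of_nat_numeral of_nat_power)
  ultimately show ?thesis
    by linarith
qed

end
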